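(* Let $k=k(N)=o(N)$ and consider the $S_k$ shuffle with boundary rates $\delta^{(k)}_j=\frac{k^2+3j^2-1}{(2j+1)(2j-1)}$, $2\le j\le k-1$. There exist absolute constants $C>0$ and $c\in(0,1)$ such that for all $N$ sufficiently large and all $x\in[N]$, $P_x(\tilde\tau_{>4k}>C/k)\le c$.
   Context: The $S_k$ shuffle with boundary rates $(\delta_j)$: on $N$ cards, each block of $k$ consecutive positions is uniformly reshuffled at rate 1, and for each $2\le j\le k-1$ the first $j$ cards and the last $j$ cards are each uniformly reshuffled at rate $\delta_j$. Let $Z_{1,t}$ be the position at time $t$ of the card with label 1; $(Z_{1,t})_{t\ge0}$ is itself a Markov chain on $[N]$, and $P_x$ (with expectation $E_x$) denotes its law when $Z_{1,0}=x$. For $y\in[N]$, $\tilde\tau_{>y}=\inf\{t\ge0:Z_{1,t}>y\}$ and $\tilde\tau_{<y}=\inf\{t\ge0:Z_{1,t}<y\}$. *)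

theory Defs
  imports "HOL-Analysis.Analysis"
begin

definition delta :: "nat \<Rightarrow> nat \<Rightarrow> real" where
  "delta k j = (real k ^ 2 + 3 * real j ^ 2 - 1) / ((2 * real j + 1) * (2 * real j - 1))"

text \<open>Jump rate of the card with label 1 from position x to position y (x, y in [N], x \<noteq> y)
  in the S_k shuffle with boundary rates delta k j: each k-block {i..i+k-1} is uniformly
  reshuffled at rate 1, and for 2 \<le> j \<le> k-1 the first j and the last j cards are uniformly
  reshuffled at rate delta k j. A uniform reshuffle of a block of size m containing x
  sends the card to each position of the block with probability 1/m.\<close>
definition Sk_rate :: "nat \<Rightarrow> nat \<Rightarrow> nat \<Rightarrow> nat \<Rightarrow> real" where
  "Sk_rate N k x y =
     (\<Sum>i\<in>{1..N+1-k}. if i \<le> x \<and> x \<le> i+k-1 \<and> i \<le> y \<and> y \<le> i+k-1 then 1 / real k else 0)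
   + (\<Sum>j\<in>{2..k-1}. delta k j *
        ((if x \<le> j \<and> y \<le> j then 1 / real j else 0)
       + (if N+1-j \<le> x \<and> N+1-j \<le> y then 1 / real j else 0)))"

definition Sk_gen :: "nat \<Rightarrow> nat \<Rightarrow> nat \<Rightarrow> nat \<Rightarrow> real" where
  "Sk_gen N k x y =
     (if x = y then - (\<Sum>z\<in>{1..N}-{x}. Sk_rate N k x z) else Sk_rate N k x y)"

fun restr_pow :: "(nat \<Rightarrow> nat \<Rightarrow> real) \<Rightarrow> nat set \<Rightarrow> nat \<Rightarrow> nat \<Rightarrow> nat \<Rightarrow> real" where
  "restr_pow Q D 0 a b = (if a = b then 1 else 0)"
| "restr_pow Q D (Suc n) a b = (\<Sum>c\<in>D. Q a c * restr_pow Q D n c b)"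

text \<open>Entries of exp(t Q_D), the transition kernel of the chain killed upon leaving D.\<close>
definition killed_kernel :: "(nat \<Rightarrow> nat \<Rightarrow> real) \<Rightarrow> nat set \<Rightarrow> real \<Rightarrow> nat \<Rightarrow> nat \<Rightarrow> real" where
  "killed_kernel Q D t a b = (\<Sum>n. t ^ n / fact n * restr_pow Q D n a b)"

text \<open>P_x(tau_{>y} > t) for the position chain Z_1 of the S_k shuffle on N cards:
  the probability that the chain started at x stays in {1..y} during [0,t].\<close>
definition surv_gt :: "nat \<Rightarrow> nat \<Rightarrow> nat \<Rightarrow> real \<Rightarrow> nat \<Rightarrow> real" where
  "surv_gt N k y t x =
     (if x \<in> {1..y} then (\<Sum>z\<in>{1..y}. killed_kernel (Sk_gen N k) {1..y} t x z) else 0)"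

end

theory Submission
  imports Defs
begin

(* Let Q be the generator of the position Z of card 1 and D = {1..4k}.  The heart of the
   proof is the drift bound Q(z^2)(a) >= (k^3 - k)/12 for a in D: away from the left end the
   k blocks containing a contribute exactly (k^3 - k)/6, and near the left end the boundary
   rates delta_j are large enough to make up for the missing blocks.  Consequently
   g(z) = 25 - z^2/k^2, which is >= 1 on D and >= 0 within distance k of D, satisfies
   Q_D g <= -(k/400) g on D.  For the chain killed on leaving D this gives
   P_x(tau_{>4k} > t) <= sum_b exp(t Q_D)(x,b) g(b) <= 25 exp(-kt/400), which is at most 1/2
   for t = 8000/k.  Positivity and the Lyapunov bound for the matrix exponential exp(t Q_D)
   come from writing it as exp(-mt) exp(t (Q_D + m I)) with Q_D + m I entrywise nonnegative. *)

lemma sum_if_eq_mult: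
  fixes f :: "'a \<Rightarrow> 'b::semiring_0"
  assumes "finite A" and "a \<in> A"
  shows "(\<Sum>x\<in>A. (if a = x then c else 0) * f x) = c * f a"
proof -
  have "(\<Sum>x\<in>A. (if a = x then c else 0) * f x) = (\<Sum>x\<in>A. if a = x then c * f x else 0)"
    by (rule sum.cong) auto
  then show ?thesis
    using assms by simp
qed

lemma sum_indicator_mult:
  fixes f :: "'a \<Rightarrow> 'b::semiring_0"
  assumes "finite A"
  shows "(\<Sum>z\<in>A. (if z \<in> S then c else 0) * f z) = c * (\<Sum>z\<in>A \<inter> S. f z)"
proof -
  have "(\<Sum>z\<in>A. (if z \<in> S then c else 0) * f z) = (\<Sum>z\<in>A. if z \<in> S then c * f z else 0)"
    by (rule sum.cong) auto
  also have "\<dots> = (\<Sum>z\<in>A \<inter> S. c * f z)"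
    using assms by (simp add: sum.inter_restrict)
  finally show ?thesis
    by (simp add: sum_distrib_left)
qed

lemma sum_binomial_Suc:
  fixes x :: "nat \<Rightarrow> 'a::comm_semiring_1"
  shows "(\<Sum>i\<le>Suc n. of_nat (Suc n choose i) * x i) =
         (\<Sum>i\<le>n. of_nat (n choose i) * x (Suc i)) + (\<Sum>i\<le>n. of_nat (n choose i) * x i)"
proof -
  have "(\<Sum>i\<le>n. of_nat (n choose i) * x i) = (\<Sum>i\<le>Suc n. of_nat (n choose i) * x i)"
    by (simp add: binomial_eq_0)
  also have "\<dots> = x 0 + (\<Sum>i\<le>n. of_nat (n choose Suc i) * x (Suc i))"
    by (subst sum.atMost_Suc_shift) simp
  finally have "(\<Sum>i\<le>n. of_nat (n choose i) * x i) = \<dots>" .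
  then show ?thesis
    by (subst sum.atMost_Suc_shift) (simp add: algebra_simps sum.distrib)
qed

lemma sum_square_interval:
  "(\<Sum>z\<in>{s..<s+n}. (real z + c)\<^sup>2) =
     real n * (real s + c + (real n - 1) / 2)\<^sup>2 + real n * ((real n)\<^sup>2 - 1) / 12"
  by (induction n) (simp_all add: field_simps power2_eq_square)

lemma mean_square_interval:
  assumes "0 < n"
  shows "(\<Sum>z\<in>{s..<s+n}. (real z)\<^sup>2 - A) / real n = (real s + (real n - 1) / 2)\<^sup>2 + ((real n)\<^sup>2 - 1) / 12 - A"
proof -
  have "(\<Sum>z\<in>{s..<s+n}. (real z)\<^sup>2 - A) = (\<Sum>z\<in>{s..<s+n}. (real z + 0)\<^sup>2) - real n * A"
    by (simp add: sum_subtractf)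
  then show ?thesis
    unfolding sum_square_interval using assms by (simp add: field_simps)
qed

lemma sum_square_atLeastLessThan:
  assumes "s \<le> k"
  shows "(\<Sum>j\<in>{s..<k}. (real j)\<^sup>2) =
    (real k - real s) * ((real k + real s - 1) / 2)\<^sup>2 + (real k - real s) * ((real k - real s)\<^sup>2 - 1) / 12"
proof -
  obtain n where k: "k = s + n"
    using assms le_Suc_ex by blast
  have "(\<Sum>j\<in>{s..<k}. (real j)\<^sup>2) = (\<Sum>j\<in>{s..<s+n}. (real j + 0)\<^sup>2)"
    unfolding k by simp
  also have "\<dots> = real n * (real s + 0 + (real n - 1) / 2)\<^sup>2 + real n * ((real n)\<^sup>2 - 1) / 12"
    by (rule sum_square_interval)
  finally show ?thesis
    unfolding k by (simp add: field_simps)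
qed

lemma sum_inverse_odd_products:
  assumes "1 \<le> s" and "s \<le> t"
  shows "(\<Sum>j\<in>{s..<t}. 1 / ((2 * real j - 1) * (2 * real j + 1))) =
    (real t - real s) / ((2 * real s - 1) * (2 * real t - 1))"
proof -
  define f where "f j = - 1 / (2 * (2 * real j - 1))" for j :: nat
  have "1 / ((2 * real j - 1) * (2 * real j + 1)) = f (Suc j) - f j" if "j \<in> {s..<t}" for j
    using that assms unfolding f_def by (simp add: field_split_simps)
  then have "(\<Sum>j\<in>{s..<t}. 1 / ((2 * real j - 1) * (2 * real j + 1))) = f t - f s"
    using sum_Suc_diff'[OF assms(2), of f] by simp
  also have "\<dots> = (real t - real s) / ((2 * real s - 1) * (2 * real t - 1))"
    using assms unfolding f_def by (simp add: field_split_simps)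
  finally show ?thesis .
qed

lemma exp_sums_real: "(\<lambda>n. x ^ n / fact n) sums exp (x::real)"
  using exp_converges[of x] by (simp add: divide_inverse mult.commute)

section \<open>The killed semigroup of a Q-matrix\<close>

definition diag_shift :: "(nat \<Rightarrow> nat \<Rightarrow> real) \<Rightarrow> real \<Rightarrow> nat \<Rightarrow> nat \<Rightarrow> real" where
  "diag_shift Q m x y = Q x y + (if x = y then m else 0)"

lemma restr_pow_diag_shift:
  assumes "finite D" and "a \<in> D"
  shows "restr_pow Q D n a b =
    (\<Sum>i\<le>n. of_nat (n choose i) * ((- m) ^ (n - i) * restr_pow (diag_shift Q m) D i a b))"
  using assms(2)
proof (induction n arbitrary: a)
  case 0
  then show ?case by simp
next
  case (Suc n)
  let ?P = "restr_pow (diag_shift Q m) D"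
  let ?x = "\<lambda>i. (- m) ^ (Suc n - i) * ?P i a b"
  have "restr_pow Q D (Suc n) a b =
        (\<Sum>c\<in>D. diag_shift Q m a c * restr_pow Q D n c b)
      - (\<Sum>c\<in>D. (if a = c then m else 0) * restr_pow Q D n c b)"
    by (simp add: diag_shift_def algebra_simps sum.distrib)
  also have "\<dots> = (\<Sum>c\<in>D. diag_shift Q m a c * restr_pow Q D n c b) - m * restr_pow Q D n a b"
    by (simp only: sum_if_eq_mult[OF assms(1) Suc.prems])
  also have "\<dots> = (\<Sum>i\<le>n. of_nat (n choose i) * ?x (Suc i)) + (\<Sum>i\<le>n. of_nat (n choose i) * ?x i)"
    using Suc.IH Suc.prems
    by (simp add: sum_distrib_left sum_distrib_right sum_negf[symmetric] sum.swap[of _ D]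
        mult_ac Suc_diff_le)
  also have "\<dots> = (\<Sum>i\<le>Suc n. of_nat (Suc n choose i) * ?x i)"
    by (rule sum_binomial_Suc [symmetric])
  finally show ?case .
qed

lemma restr_pow_nonneg:
  assumes "\<And>x y. x \<in> D \<Longrightarrow> y \<in> D \<Longrightarrow> 0 \<le> B x y" and "a \<in> D"
  shows "0 \<le> restr_pow B D n a b"
  using assms(2) by (induction n arbitrary: a) (auto intro!: sum_nonneg mult_nonneg_nonneg assms(1))

lemma restr_pow_abs_le:
  assumes row: "\<And>x. x \<in> D \<Longrightarrow> (\<Sum>y\<in>D. \<bar>B x y\<bar>) \<le> W" and "a \<in> D"
  shows "\<bar>restr_pow B D n a b\<bar> \<le> W ^ n"
  using assms(2)
proof (induction n arbitrary: a)
  case 0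
  then show ?case by simp
next
  case (Suc n)
  have W: "0 \<le> W"
    using row[OF Suc.prems] by (meson order_trans sum_nonneg abs_ge_zero)
  have "\<bar>restr_pow B D (Suc n) a b\<bar> \<le> (\<Sum>c\<in>D. \<bar>B a c\<bar> * \<bar>restr_pow B D n c b\<bar>)"
    by (simp add: sum_abs[THEN order_trans] abs_mult)
  also have "\<dots> \<le> (\<Sum>c\<in>D. \<bar>B a c\<bar> * W ^ n)"
    by (intro sum_mono mult_left_mono Suc.IH) auto
  also have "\<dots> \<le> W * W ^ n"
    using row[OF Suc.prems] W by (simp add: sum_distrib_right[symmetric] mult_right_mono)
  finally show ?case by simp
qed

lemma summable_restr_pow_series:
  assumes "finite D" and "a \<in> D"
  shows "summable (\<lambda>n. norm (t ^ n / fact n * restr_pow B D n a b))"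
proof -
  define W where "W = (\<Sum>x\<in>D. \<Sum>y\<in>D. \<bar>B x y\<bar>)"
  have "(\<Sum>y\<in>D. \<bar>B x y\<bar>) \<le> W" if "x \<in> D" for x
    unfolding W_def using assms(1) that by (intro member_le_sum) (auto intro: sum_nonneg)
  then have bound: "norm (norm (t ^ n / fact n * restr_pow B D n a b)) \<le> (\<bar>t\<bar> * W) ^ n / fact n" for n
    using restr_pow_abs_le[OF _ assms(2), of B W n b]
    by (simp add: abs_mult power_abs power_mult_distrib divide_right_mono mult_left_mono)
  show ?thesis
    by (rule summable_comparison_test'[OF sums_summable[OF exp_sums_real] bound])
qed

lemma killed_kernel_sums:
  assumes "finite D" and "a \<in> D"
  shows "(\<lambda>n. t ^ n / fact n * restr_pow Q D n a b) sums killed_kernel Q D t a b"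
  unfolding killed_kernel_def
  using summable_norm_cancel[OF summable_restr_pow_series[OF assms]] by (rule summable_sums)

lemma killed_kernel_diag_shift:
  assumes "finite D" and "a \<in> D"
  shows "killed_kernel Q D t a b = exp (- m * t) * killed_kernel (diag_shift Q m) D t a b"
proof -
  let ?A = "\<lambda>i. t ^ i / fact i * restr_pow (diag_shift Q m) D i a b"
  let ?X = "\<lambda>j. (- m * t) ^ j / fact j"
  have "summable (\<lambda>j. norm (?X j))"
    using exp_sums_real[of "\<bar>m * t\<bar>"] by (auto dest: sums_summable simp: power_abs abs_mult)
  then have "(\<lambda>n. \<Sum>i\<le>n. ?A i * ?X (n - i)) sums (suminf ?A * suminf ?X)"
    by (rule Cauchy_product_sums[OF summable_restr_pow_series[OF assms]])
  moreover have "(\<Sum>i\<le>n. ?A i * ?X (n - i)) = t ^ n / fact n * restr_pow Q D n a b" for n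
  proof -
    have "?A i * ?X (n - i) = t ^ n / fact n *
            (of_nat (n choose i) * ((- m) ^ (n - i) * restr_pow (diag_shift Q m) D i a b))"
      if "i \<le> n" for i
    proof -
      have "t ^ n = t ^ i * t ^ (n - i)"
        using that by (simp add: power_add[symmetric])
      moreover have "(- m * t) ^ (n - i) = (- m) ^ (n - i) * t ^ (n - i)"
        by (rule power_mult_distrib)
      ultimately show ?thesis
        using that by (simp only: binomial_fact) (simp add: field_simps)
    qed
    then have "(\<Sum>i\<le>n. ?A i * ?X (n - i)) = (\<Sum>i\<le>n. t ^ n / fact n *
            (of_nat (n choose i) * ((- m) ^ (n - i) * restr_pow (diag_shift Q m) D i a b)))"
      by (intro sum.cong) auto
    also have "\<dots> = t ^ n / fact n * restr_pow Q D n a b"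
      by (simp only: restr_pow_diag_shift[OF assms, where Q = Q and m = m] sum_distrib_left)
    finally show ?thesis .
  qed
  ultimately have "(\<lambda>n. t ^ n / fact n * restr_pow Q D n a b) sums
      (killed_kernel (diag_shift Q m) D t a b * exp (- m * t))"
    using sums_unique[OF exp_sums_real] by (simp add: killed_kernel_def)
  with killed_kernel_sums[OF assms] show ?thesis
    by (metis sums_unique2 mult.commute)
qed

lemma restr_pow_lyapunov:
  assumes "finite D" and nonneg: "\<And>x y. x \<in> D \<Longrightarrow> y \<in> D \<Longrightarrow> 0 \<le> B x y"
    and drift: "\<And>x. x \<in> D \<Longrightarrow> (\<Sum>y\<in>D. B x y * g y) \<le> \<mu> * g x"
    and "0 \<le> \<mu>" and "a \<in> D"
  shows "(\<Sum>b\<in>D. restr_pow B D n a b * g b) \<le> \<mu> ^ n * g a"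
  using \<open>a \<in> D\<close>
proof (induction n arbitrary: a)
  case 0
  then show ?case using sum_if_eq_mult[OF \<open>finite D\<close> \<open>a \<in> D\<close>, of 1 g] by simp
next
  case (Suc n)
  have "(\<Sum>b\<in>D. restr_pow B D (Suc n) a b * g b) = (\<Sum>b\<in>D. \<Sum>c\<in>D. B a c * restr_pow B D n c b * g b)"
    by (simp add: sum_distrib_right)
  also have "\<dots> = (\<Sum>c\<in>D. B a c * (\<Sum>b\<in>D. restr_pow B D n c b * g b))"
    by (subst sum.swap) (simp add: sum_distrib_left mult.assoc)
  also have "\<dots> \<le> (\<Sum>c\<in>D. B a c * (\<mu> ^ n * g c))"
    by (intro sum_mono mult_left_mono Suc.IH nonneg Suc.prems)
  also have "\<dots> = \<mu> ^ n * (\<Sum>c\<in>D. B a c * g c)"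
    by (simp add: sum_distrib_left mult.left_commute)
  also have "\<dots> \<le> \<mu> ^ n * (\<mu> * g a)"
    using drift[OF Suc.prems] \<open>0 \<le> \<mu>\<close> by (intro mult_left_mono) simp_all
  finally show ?case by (simp add: mult_ac)
qed

lemma diag_shift_nonneg_obtain:
  assumes "finite D"
    and offdiag: "\<And>x y. x \<in> D \<Longrightarrow> y \<in> D \<Longrightarrow> x \<noteq> y \<Longrightarrow> 0 \<le> Q x y"
  obtains m where "l \<le> m" and "\<And>x y. x \<in> D \<Longrightarrow> y \<in> D \<Longrightarrow> 0 \<le> diag_shift Q m x y"
proof
  define m where "m = \<bar>l\<bar> + (\<Sum>x\<in>D. \<bar>Q x x\<bar>)"
  have diag: "\<bar>Q x x\<bar> \<le> (\<Sum>x\<in>D. \<bar>Q x x\<bar>)" if "x \<in> D" for x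
    using \<open>finite D\<close> that by (intro member_le_sum) auto
  have "0 \<le> (\<Sum>x\<in>D. \<bar>Q x x\<bar>)"
    by (intro sum_nonneg) simp
  then show "l \<le> m"
    unfolding m_def by linarith
  show "0 \<le> diag_shift Q m x y" if "x \<in> D" and "y \<in> D" for x y
  proof (cases "x = y")
    case True
    have "0 \<le> Q x x + m"
      using diag[OF \<open>x \<in> D\<close>] abs_ge_minus_self[of "Q x x"] abs_ge_zero[of l] unfolding m_def by linarith
    with True show ?thesis
      by (simp add: diag_shift_def)
  next
    case False
    then show ?thesis
      using offdiag[OF that] by (simp add: diag_shift_def)
  qed
qed

lemma killed_kernel_nonneg:
  assumes "finite D" and "a \<in> D" and "0 \<le> t"
    and offdiag: "\<And>x y. x \<in> D \<Longrightarrow> y \<in> D \<Longrightarrow> x \<noteq> y \<Longrightarrow> 0 \<le> Q x y"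
  shows "0 \<le> killed_kernel Q D t a b"
proof -
  obtain m where "\<And>x y. x \<in> D \<Longrightarrow> y \<in> D \<Longrightarrow> 0 \<le> diag_shift Q m x y"
    using diag_shift_nonneg_obtain[where Q = Q and l = 0, OF assms(1) offdiag] by blast
  then have "0 \<le> restr_pow (diag_shift Q m) D n a b" for n
    using \<open>a \<in> D\<close> by (rule restr_pow_nonneg)
  then have "0 \<le> t ^ n / fact n * restr_pow (diag_shift Q m) D n a b" for n
    using \<open>0 \<le> t\<close> by simp
  then have "0 \<le> killed_kernel (diag_shift Q m) D t a b"
    using killed_kernel_sums[OF assms(1,2)] by (rule sums_le[OF _ sums_zero])
  then show ?thesis
    using killed_kernel_diag_shift[OF assms(1,2), where Q = Q and m = m] by simp
qed

lemma killed_kernel_lyapunov_nonneg: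
  assumes "finite D" and "a \<in> D" and "0 \<le> t" and "0 \<le> \<mu>"
    and nonneg: "\<And>x y. x \<in> D \<Longrightarrow> y \<in> D \<Longrightarrow> 0 \<le> B x y"
    and drift: "\<And>x. x \<in> D \<Longrightarrow> (\<Sum>y\<in>D. B x y * g y) \<le> \<mu> * g x"
  shows "(\<Sum>b\<in>D. killed_kernel B D t a b * g b) \<le> exp (t * \<mu>) * g a"
proof -
  have series: "(\<lambda>n. \<Sum>b\<in>D. t ^ n / fact n * restr_pow B D n a b * g b) sums
      (\<Sum>b\<in>D. killed_kernel B D t a b * g b)"
    by (intro sums_sum sums_mult2 killed_kernel_sums assms(1,2))
  have majorant: "(\<lambda>n. (t * \<mu>) ^ n / fact n * g a) sums (exp (t * \<mu>) * g a)"
    by (intro sums_mult2 exp_sums_real)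
  have termwise: "(\<Sum>b\<in>D. t ^ n / fact n * restr_pow B D n a b * g b) \<le> (t * \<mu>) ^ n / fact n * g a" for n
  proof -
    have "0 \<le> t ^ n / fact n"
      using \<open>0 \<le> t\<close> by simp
    have "(\<Sum>b\<in>D. t ^ n / fact n * restr_pow B D n a b * g b) =
        t ^ n / fact n * (\<Sum>b\<in>D. restr_pow B D n a b * g b)"
      by (simp add: sum_distrib_left mult.assoc)
    also have "\<dots> \<le> t ^ n / fact n * (\<mu> ^ n * g a)"
      using restr_pow_lyapunov[OF assms(1) nonneg drift assms(4,2), of n] \<open>0 \<le> t ^ n / fact n\<close>
      by (rule mult_left_mono)
    also have "\<dots> = (t * \<mu>) ^ n / fact n * g a"
      by (simp add: power_mult_distrib)
    finally show ?thesis .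
  qed
  show ?thesis
    by (rule sums_le[OF termwise series majorant])
qed

lemma killed_kernel_lyapunov:
  assumes "finite D" and "a \<in> D" and "0 \<le> t"
    and offdiag: "\<And>x y. x \<in> D \<Longrightarrow> y \<in> D \<Longrightarrow> x \<noteq> y \<Longrightarrow> 0 \<le> Q x y"
    and drift: "\<And>x. x \<in> D \<Longrightarrow> (\<Sum>y\<in>D. Q x y * g y) \<le> - l * g x"
  shows "(\<Sum>b\<in>D. killed_kernel Q D t a b * g b) \<le> exp (- l * t) * g a"
proof -
  obtain m where "l \<le> m" and nonneg: "\<And>x y. x \<in> D \<Longrightarrow> y \<in> D \<Longrightarrow> 0 \<le> diag_shift Q m x y"
    using diag_shift_nonneg_obtain[where Q = Q and l = l, OF assms(1) offdiag] by blast
  have "(\<Sum>y\<in>D. diag_shift Q m x y * g y) \<le> (m - l) * g x" if "x \<in> D" for x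
  proof -
    have "(\<Sum>y\<in>D. diag_shift Q m x y * g y) = (\<Sum>y\<in>D. Q x y * g y) + m * g x"
      unfolding diag_shift_def distrib_right sum.distrib sum_if_eq_mult[OF \<open>finite D\<close> that] ..
    then show ?thesis
      using drift[OF that] by (simp add: algebra_simps)
  qed
  with \<open>l \<le> m\<close> have "(\<Sum>b\<in>D. killed_kernel (diag_shift Q m) D t a b * g b) \<le> exp (t * (m - l)) * g a"
    by (intro killed_kernel_lyapunov_nonneg[OF assms(1-3) _ nonneg]) simp_all
  then have "exp (- m * t) * (\<Sum>b\<in>D. killed_kernel (diag_shift Q m) D t a b * g b)
      \<le> exp (- m * t) * exp (t * (m - l)) * g a"
    unfolding mult.assoc by (rule mult_left_mono) simp
  also have "exp (- m * t) * exp (t * (m - l)) = exp (- l * t)"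
    by (simp add: exp_add[symmetric] algebra_simps)
  finally show ?thesis
    unfolding killed_kernel_diag_shift[OF assms(1,2), where Q = Q and m = m] sum_distrib_left mult.assoc .
qed

lemma killed_kernel_mass_le:
  assumes "finite D" and "a \<in> D" and "0 \<le> t"
    and offdiag: "\<And>x y. x \<in> D \<Longrightarrow> y \<in> D \<Longrightarrow> x \<noteq> y \<Longrightarrow> 0 \<le> Q x y"
    and drift: "\<And>x. x \<in> D \<Longrightarrow> (\<Sum>y\<in>D. Q x y * g y) \<le> - l * g x"
    and g_ge_1: "\<And>x. x \<in> D \<Longrightarrow> 1 \<le> g x"
  shows "(\<Sum>b\<in>D. killed_kernel Q D t a b) \<le> exp (- l * t) * g a"
proof -
  have "(\<Sum>b\<in>D. killed_kernel Q D t a b) \<le> (\<Sum>b\<in>D. killed_kernel Q D t a b * g b)"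
  proof (rule sum_mono)
    fix b assume "b \<in> D"
    have "0 \<le> killed_kernel Q D t a b"
      using assms(1-3) offdiag by (rule killed_kernel_nonneg)
    then show "killed_kernel Q D t a b \<le> killed_kernel Q D t a b * g b"
      using mult_left_mono[OF g_ge_1[OF \<open>b \<in> D\<close>]] by simp
  qed
  also have "\<dots> \<le> exp (- l * t) * g a"
    using assms(1-3) offdiag drift by (rule killed_kernel_lyapunov)
  finally show ?thesis .
qed

section \<open>Jump rates of the card near the left end\<close>

lemma delta_numerator_nonneg:
  assumes "1 \<le> j"
  shows "0 \<le> (real k)\<^sup>2 + 3 * (real j)\<^sup>2 - 1"
proof -
  have "1 \<le> (real j)\<^sup>2"
    using assms by simp
  then show ?thesis
    using zero_le_power2[of "real k"] by linarith
qed

lemma delta_nonneg: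
  assumes "1 \<le> j"
  shows "0 \<le> delta k j"
proof -
  note delta_numerator_nonneg[OF assms]
  moreover have "0 < (2 * real j + 1) * (2 * real j - 1)"
    using assms by simp
  ultimately show ?thesis
    unfolding delta_def by (rule divide_nonneg_pos)
qed

lemma delta_eq:
  assumes "1 \<le> j"
  shows "delta k j = 3 / 4 + ((real k)\<^sup>2 - 1 / 4) / ((2 * real j - 1) * (2 * real j + 1))"
proof -
  have "0 < (2 * real j - 1) * (2 * real j + 1)"
    using assms by simp
  then show ?thesis
    unfolding delta_def by (simp add: field_simps power2_eq_square)
qed

lemma Sk_rate_nonneg: "0 \<le> Sk_rate N k x y"
  unfolding Sk_rate_def by (intro add_nonneg_nonneg sum_nonneg mult_nonneg_nonneg delta_nonneg) auto

lemma Sk_gen_sum_eq: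
  assumes "a \<in> {1..N}"
  shows "(\<Sum>c\<in>{1..N}. Sk_gen N k a c * g c) = (\<Sum>c\<in>{1..N}. Sk_rate N k a c * (g c - g a))"
proof -
  have "(\<Sum>c\<in>{1..N}. Sk_gen N k a c * g c) =
      (\<Sum>c\<in>{1..N}-{a}. Sk_rate N k a c * g c) - (\<Sum>c\<in>{1..N}-{a}. Sk_rate N k a c) * g a"
    using assms by (simp add: sum.remove Sk_gen_def)
  also have "\<dots> = (\<Sum>c\<in>{1..N}-{a}. Sk_rate N k a c * (g c - g a))"
    by (simp add: sum_distrib_right sum_subtractf right_diff_distrib)
  also have "\<dots> = (\<Sum>c\<in>{1..N}. Sk_rate N k a c * (g c - g a))"
    using assms by (simp add: sum.remove)
  finally show ?thesis .
qed

lemma Sk_rate_eq_0_far: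
  assumes "6 * k \<le> N" and "a \<le> 4 * k" and "a + k \<le> z"
  shows "Sk_rate N k a z = 0"
proof -
  have "(\<Sum>i\<in>{1..N+1-k}. if i \<le> a \<and> a \<le> i+k-1 \<and> i \<le> z \<and> z \<le> i+k-1 then 1 / real k else 0) = 0"
    using assms by (intro sum.neutral) auto
  moreover have "(\<Sum>j\<in>{2..k-1}. delta k j *
      ((if a \<le> j \<and> z \<le> j then 1 / real j else 0) + (if N+1-j \<le> a \<and> N+1-j \<le> z then 1 / real j else 0))) = 0"
    using assms by (intro sum.neutral) auto
  ultimately show ?thesis
    by (simp add: Sk_rate_def)
qed

lemma Sk_rate_left_end:
  assumes "1 \<le> k" and "6 * k \<le> N" and "1 \<le> a" and "a \<le> 4 * k"
  shows "Sk_rate N k a z =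
    (\<Sum>i\<in>{a + 1 - min a k..<a + 1}. if z \<in> {i..<i + k} then 1 / real k else 0) +
    (\<Sum>j\<in>{max 2 a..<k}. if z \<in> {..j} then delta k j / real j else 0)"
proof -
  have blocks: "{i \<in> {1..N+1-k}. i \<le> a \<and> a \<le> i+k-1} = {a + 1 - min a k..<a + 1}"
    using assms by auto
  have boundary: "{j \<in> {2..k-1}. a \<le> j} = {max 2 a..<k}"
    using assms by auto
  have "(\<Sum>i\<in>{1..N+1-k}. if i \<le> a \<and> a \<le> i+k-1 \<and> i \<le> z \<and> z \<le> i+k-1 then 1 / real k else 0) =
      (\<Sum>i\<in>{1..N+1-k}. if i \<le> a \<and> a \<le> i+k-1 then (if z \<in> {i..<i + k} then 1 / real k else 0) else 0)"
    using assms by (intro sum.cong) auto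
  also have "\<dots> = (\<Sum>i\<in>{a + 1 - min a k..<a + 1}. if z \<in> {i..<i + k} then 1 / real k else 0)"
    by (simp only: sum.inter_filter[symmetric] finite_atLeastAtMost blocks)
  finally have block_part: "(\<Sum>i\<in>{1..N+1-k}. if i \<le> a \<and> a \<le> i+k-1 \<and> i \<le> z \<and> z \<le> i+k-1 then 1 / real k else 0) =
      (\<Sum>i\<in>{a + 1 - min a k..<a + 1}. if z \<in> {i..<i + k} then 1 / real k else 0)" .
  have "(\<Sum>j\<in>{2..k-1}. delta k j *
      ((if a \<le> j \<and> z \<le> j then 1 / real j else 0) + (if N+1-j \<le> a \<and> N+1-j \<le> z then 1 / real j else 0))) =
      (\<Sum>j\<in>{2..k-1}. if a \<le> j then (if z \<in> {..j} then delta k j / real j else 0) else 0)"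
    using assms by (intro sum.cong) auto
  also have "\<dots> = (\<Sum>j\<in>{max 2 a..<k}. if z \<in> {..j} then delta k j / real j else 0)"
    by (simp only: sum.inter_filter[symmetric] finite_atLeastAtMost boundary)
  finally show ?thesis
    using block_part by (simp add: Sk_rate_def)
qed

section \<open>Drift of the squared position\<close>

lemma Sk_square_drift_eq:
  assumes "1 \<le> k" and "6 * k \<le> N" and "1 \<le> a" and "a \<le> 4 * k"
  shows "(\<Sum>z\<in>{1..N}. Sk_rate N k a z * ((real z)\<^sup>2 - (real a)\<^sup>2)) =
    (\<Sum>i\<in>{a + 1 - min a k..<a + 1}. (real i + (real k - 1) / 2)\<^sup>2 + ((real k)\<^sup>2 - 1) / 12 - (real a)\<^sup>2) +
    (\<Sum>j\<in>{max 2 a..<k}. delta k j * ((real j + 1) * (2 * real j + 1) / 6 - (real a)\<^sup>2))"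
proof -
  let ?w = "\<lambda>z::nat. (real z)\<^sup>2 - (real a)\<^sup>2"
  have block: "(\<Sum>z\<in>{1..N}. (if z \<in> {i..<i + k} then 1 / real k else 0) * ?w z) =
      (real i + (real k - 1) / 2)\<^sup>2 + ((real k)\<^sup>2 - 1) / 12 - (real a)\<^sup>2"
    if "i \<in> {a + 1 - min a k..<a + 1}" for i
  proof -
    have "{1..N} \<inter> {i..<i + k} = {i..<i + k}"
      using that assms by auto
    then have "(\<Sum>z\<in>{1..N}. (if z \<in> {i..<i + k} then 1 / real k else 0) * ?w z) =
        (\<Sum>z\<in>{i..<i + k}. ?w z) / real k"
      unfolding sum_indicator_mult[OF finite_atLeastAtMost] by simp
    then show ?thesis
      using mean_square_interval[where s = i and n = k and A = "(real a)\<^sup>2"] assms by simp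
  qed
  have boundary: "(\<Sum>z\<in>{1..N}. (if z \<in> {..j} then delta k j / real j else 0) * ?w z) =
      delta k j * ((real j + 1) * (2 * real j + 1) / 6 - (real a)\<^sup>2)"
    if "j \<in> {max 2 a..<k}" for j
  proof -
    have "{1..N} \<inter> {..j} = {1..<1 + j}"
      using that assms by auto
    then have "(\<Sum>z\<in>{1..N}. (if z \<in> {..j} then delta k j / real j else 0) * ?w z) =
        delta k j * ((\<Sum>z\<in>{1..<1 + j}. ?w z) / real j)"
      unfolding sum_indicator_mult[OF finite_atLeastAtMost] by simp
    also have "(\<Sum>z\<in>{1..<1 + j}. ?w z) / real j = (real j + 1) * (2 * real j + 1) / 6 - (real a)\<^sup>2"
      using mean_square_interval[where s = 1 and n = j and A = "(real a)\<^sup>2"] that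
      by (simp add: field_simps power2_eq_square)
    finally show ?thesis .
  qed
  have "(\<Sum>z\<in>{1..N}. Sk_rate N k a z * ?w z) =
      (\<Sum>i\<in>{a + 1 - min a k..<a + 1}. \<Sum>z\<in>{1..N}. (if z \<in> {i..<i + k} then 1 / real k else 0) * ?w z) +
      (\<Sum>j\<in>{max 2 a..<k}. \<Sum>z\<in>{1..N}. (if z \<in> {..j} then delta k j / real j else 0) * ?w z)"
    unfolding Sk_rate_left_end[OF assms] distrib_right sum.distrib sum_distrib_right
    by (simp only: sum.swap[of _ "{1..N}"])
  then show ?thesis
    using block boundary by simp
qed

lemma block_sum_eq:
  "(\<Sum>i\<in>{s..<s+n}. (real i + (real k - 1) / 2)\<^sup>2 + ((real k)\<^sup>2 - 1) / 12 - (real a)\<^sup>2) =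
    real n * (real s + (real k - 1) / 2 + (real n - 1) / 2)\<^sup>2 + real n * ((real n)\<^sup>2 - 1) / 12
    + real n * (((real k)\<^sup>2 - 1) / 12 - (real a)\<^sup>2)"
proof -
  have "(\<Sum>i\<in>{s..<s+n}. (real i + (real k - 1) / 2)\<^sup>2 + ((real k)\<^sup>2 - 1) / 12 - (real a)\<^sup>2) =
      (\<Sum>i\<in>{s..<s+n}. (real i + (real k - 1) / 2)\<^sup>2) + real n * (((real k)\<^sup>2 - 1) / 12 - (real a)\<^sup>2)"
    by (simp add: sum.distrib sum_subtractf right_diff_distrib)
  then show ?thesis
    unfolding sum_square_interval .
qed

lemma Sk_square_drift_bulk:
  assumes "1 \<le> k" and "6 * k \<le> N" and "k \<le> a" and "a \<le> 4 * k"
  shows "(\<Sum>z\<in>{1..N}. Sk_rate N k a z * ((real z)\<^sup>2 - (real a)\<^sup>2)) = ((real k)^3 - real k) / 6"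
proof -
  have "1 \<le> a"
    using assms(1,3) by simp
  have sets: "{a + 1 - min a k..<a + 1} = {a + 1 - k..<(a + 1 - k) + k}" "{max 2 a..<k} = {}"
    using assms(3) by auto
  have "(\<Sum>z\<in>{1..N}. Sk_rate N k a z * ((real z)\<^sup>2 - (real a)\<^sup>2)) =
      real k * (real (a + 1 - k) + (real k - 1) / 2 + (real k - 1) / 2)\<^sup>2 + real k * ((real k)\<^sup>2 - 1) / 12
      + real k * (((real k)\<^sup>2 - 1) / 12 - (real a)\<^sup>2)"
    unfolding Sk_square_drift_eq[OF assms(1,2) \<open>1 \<le> a\<close> assms(4)] sets block_sum_eq sum.empty by simp
  also have "\<dots> = ((real k)^3 - real k) / 6"
    using assms(3) by (simp add: of_nat_diff field_simps power2_eq_square power3_eq_cube)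
  finally show ?thesis .
qed

(* Only the last term of this lower bound is not polynomial in j, and it telescopes. *)
lemma delta_boundary_term_ge:
  assumes "1 \<le> j"
  shows "((real k)\<^sup>2 - 1) / 12 + (real j)\<^sup>2 / 4 - 3 * (real a)\<^sup>2 / 4
      - (real a)\<^sup>2 * ((real k)\<^sup>2 - 1 / 4) / ((2 * real j - 1) * (2 * real j + 1))
    \<le> delta k j * ((real j + 1) * (2 * real j + 1) / 6 - (real a)\<^sup>2)"
proof -
  have j: "0 < 2 * real j - 1"
    using assms by simp
  note num = delta_numerator_nonneg[OF assms, of k]
  define R where "R = ((real k)\<^sup>2 + 3 * (real j)\<^sup>2 - 1) / (4 * (2 * real j - 1))"
  define X where "X = (real a)\<^sup>2 * ((real k)\<^sup>2 - 1 / 4) / ((2 * real j - 1) * (2 * real j + 1))"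
  have mean: "delta k j * ((real j + 1) * (2 * real j + 1) / 6) = ((real k)\<^sup>2 + 3 * (real j)\<^sup>2 - 1) / 12 + R"
    using j unfolding delta_def R_def by (simp add: divide_simps) (simp add: algebra_simps)
  have "0 \<le> R"
    using num j unfolding R_def by simp
  have square: "delta k j * (real a)\<^sup>2 = 3 * (real a)\<^sup>2 / 4 + X"
    unfolding delta_eq[OF assms] X_def by (simp add: algebra_simps)
  have "((real k)\<^sup>2 - 1) / 12 + (real j)\<^sup>2 / 4 - 3 * (real a)\<^sup>2 / 4 - X
      \<le> delta k j * ((real j + 1) * (2 * real j + 1) / 6) - delta k j * (real a)\<^sup>2"
    unfolding mean square using \<open>0 \<le> R\<close> by (simp add: field_simps)
  then show ?thesis
    unfolding X_def by (simp add: right_diff_distrib)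
qed

definition edge_block_drift :: "real \<Rightarrow> real \<Rightarrow> real" where
  "edge_block_drift a k = a * ((k + a) / 2)\<^sup>2 + a * (a\<^sup>2 - 1) / 12 + a * ((k\<^sup>2 - 1) / 12 - a\<^sup>2)"

definition boundary_drift_bound :: "real \<Rightarrow> real \<Rightarrow> real \<Rightarrow> real" where
  "boundary_drift_bound a s k =
     (k - s) * ((k\<^sup>2 - 1) / 12 - 3 * a\<^sup>2 / 4)
     + ((k - s) * ((k + s - 1) / 2)\<^sup>2 + (k - s) * ((k - s)\<^sup>2 - 1) / 12) / 4
     - a\<^sup>2 * (2 * k + 1) * (k - s) / (4 * (2 * s - 1))"

lemma boundary_sum_ge:
  assumes "1 \<le> s" and "s \<le> k"
  shows "boundary_drift_bound (real a) (real s) (real k)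
    \<le> (\<Sum>j\<in>{s..<k}. delta k j * ((real j + 1) * (2 * real j + 1) / 6 - (real a)\<^sup>2))"
proof -
  define C where "C = (real a)\<^sup>2 * ((real k)\<^sup>2 - 1 / 4)"
  define u where "u j = 1 / ((2 * real j - 1) * (2 * real j + 1))" for j :: nat
  have telescope: "C * (\<Sum>j\<in>{s..<k}. u j) = (real a)\<^sup>2 * (2 * real k + 1) * (real k - real s) / (4 * (2 * real s - 1))"
  proof -
    define v w where "v = 2 * real k - 1" and "w = 2 * real s - 1"
    have "0 < v" and "0 < w"
      using assms by (auto simp: v_def w_def)
    have eqs: "(real k)\<^sup>2 - 1 / 4 = v * (v + 2) / 4" "2 * real k + 1 = v + 2"
      "real k - real s = (v - w) / 2"
      by (simp_all add: v_def w_def algebra_simps power2_eq_square)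
    show ?thesis
      unfolding C_def u_def sum_inverse_odd_products[OF assms] v_def[symmetric] w_def[symmetric] eqs
      using \<open>0 < v\<close> \<open>0 < w\<close> by (simp add: field_simps)
  qed
  have "(\<Sum>j\<in>{s..<k}. (((real k)\<^sup>2 - 1) / 12 - 3 * (real a)\<^sup>2 / 4) + (real j)\<^sup>2 / 4 - C * u j) =
    (real k - real s) * (((real k)\<^sup>2 - 1) / 12 - 3 * (real a)\<^sup>2 / 4) + (\<Sum>j\<in>{s..<k}. (real j)\<^sup>2) / 4
      - C * (\<Sum>j\<in>{s..<k}. u j)"
    using assms(2) by (simp add: sum.distrib sum_subtractf sum_divide_distrib[symmetric] sum_distrib_left of_nat_diff)
  moreover have "(\<Sum>j\<in>{s..<k}. (((real k)\<^sup>2 - 1) / 12 - 3 * (real a)\<^sup>2 / 4) + (real j)\<^sup>2 / 4 - C * u j)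
      \<le> (\<Sum>j\<in>{s..<k}. delta k j * ((real j + 1) * (2 * real j + 1) / 6 - (real a)\<^sup>2))"
  proof (rule sum_mono)
    fix j assume "j \<in> {s..<k}"
    then have "1 \<le> j"
      using assms by simp
    then show "((real k)\<^sup>2 - 1) / 12 - 3 * (real a)\<^sup>2 / 4 + (real j)\<^sup>2 / 4 - C * u j
        \<le> delta k j * ((real j + 1) * (2 * real j + 1) / 6 - (real a)\<^sup>2)"
      using delta_boundary_term_ge[of j k a] unfolding C_def u_def by simp
  qed
  ultimately show ?thesis
    unfolding boundary_drift_bound_def sum_square_atLeastLessThan[OF assms(2)] telescope by simp
qed

lemma edge_correction_le:
  fixes a k :: real
  assumes "1 \<le> a" and "a \<le> k"
  shows "a\<^sup>2 * (2 * k + 1) * (k - a) / (4 * (2 * a - 1)) \<le> (a + 1) * (2 * k + 1) * (k - a) / 8"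
proof -
  have "a\<^sup>2 / (2 * a - 1) \<le> (a + 1) / 2"
    using assms(1) by (simp add: field_simps power2_eq_square)
  then have "(2 * k + 1) * (k - a) / 4 * (a\<^sup>2 / (2 * a - 1)) \<le> (2 * k + 1) * (k - a) / 4 * ((a + 1) / 2)"
    using assms by (intro mult_left_mono) auto
  then show ?thesis
    by (simp add: field_simps)
qed

lemma edge_drift_ge:
  fixes a k :: real
  assumes "2 \<le> a" and "a + 1 \<le> k"
  shows "(k ^ 3 - k) / 12 \<le> edge_block_drift a k + boundary_drift_bound a a k"
proof -
  define e d where "e = a - 2" and "d = k - a - 1"
  have "0 \<le> e" "0 \<le> d" and a: "a = e + 2" and k: "k = e + d + 3"
    using assms by (auto simp: e_def d_def)
  \<comment> \<open>the difference of the two sides, as a polynomial in \<open>e, d \<ge> 0\<close>\<close>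
  then have "0 \<le> 3/8 + d/6 + 3/8*d^2 + d^3/12 + 37/24*e + 7/8*e*d + e*d^2/4 + 3/4*e^2 + e^2*d/4 + e^3/12"
    by (intro add_nonneg_nonneg mult_nonneg_nonneg) auto
  then have "(k ^ 3 - k) / 12 \<le> edge_block_drift a k
      + ((k - a) * ((k\<^sup>2 - 1) / 12 - 3 * a\<^sup>2 / 4)
         + ((k - a) * ((k + a - 1) / 2)\<^sup>2 + (k - a) * ((k - a)\<^sup>2 - 1) / 12) / 4
         - (a + 1) * (2 * k + 1) * (k - a) / 8)"
    unfolding edge_block_drift_def a k by (simp add: field_simps power2_eq_square power3_eq_cube)
  moreover have "a\<^sup>2 * (2 * k + 1) * (k - a) / (4 * (2 * a - 1)) \<le> (a + 1) * (2 * k + 1) * (k - a) / 8"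
    using assms by (intro edge_correction_le) auto
  ultimately show ?thesis
    unfolding boundary_drift_bound_def by linarith
qed

lemma corner_drift_ge:
  fixes k :: real
  assumes "2 \<le> k"
  shows "(k ^ 3 - k) / 12 \<le> edge_block_drift 1 k + boundary_drift_bound 1 2 k"
proof -
  define d where "d = k - 2"
  have "0 \<le> d" and k: "k = d + 2"
    using assms by (auto simp: d_def)
  \<comment> \<open>the difference of the two sides, as a polynomial in \<open>d \<ge> 0\<close>\<close>
  then have "0 \<le> 1 + 13/24*d + 3/8*d^2 + d^3/12"
    by (intro add_nonneg_nonneg mult_nonneg_nonneg) auto
  then show ?thesis
    unfolding edge_block_drift_def boundary_drift_bound_def k by (simp add: field_simps power2_eq_square power3_eq_cube)
qed

lemma Sk_square_drift_edge_ge: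
  assumes "2 \<le> k" and "6 * k \<le> N" and "1 \<le> a" and "a < k"
  shows "((real k)^3 - real k) / 12 \<le> (\<Sum>z\<in>{1..N}. Sk_rate N k a z * ((real z)\<^sup>2 - (real a)\<^sup>2))"
proof -
  let ?boundary = "\<lambda>j. delta k j * ((real j + 1) * (2 * real j + 1) / 6 - (real a)\<^sup>2)"
  have "1 \<le> k" and "a \<le> 4 * k"
    using assms by auto
  have blocks: "{a + 1 - min a k..<a + 1} = {1..<1 + a}"
    using assms(4) by auto
  have drift: "(\<Sum>z\<in>{1..N}. Sk_rate N k a z * ((real z)\<^sup>2 - (real a)\<^sup>2)) =
      edge_block_drift (real a) (real k) + (\<Sum>j\<in>{max 2 a..<k}. ?boundary j)"
    unfolding Sk_square_drift_eq[OF \<open>1 \<le> k\<close> assms(2,3) \<open>a \<le> 4 * k\<close>] blocks block_sum_eq edge_block_drift_def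
    by (simp add: field_simps power2_eq_square)
  show ?thesis
  proof (cases "a = 1")
    case True
    then have max: "max 2 a = 2" and real_a: "real a = 1"
      by simp_all
    have "boundary_drift_bound 1 2 (real k) \<le> (\<Sum>j\<in>{max 2 a..<k}. ?boundary j)"
      using boundary_sum_ge[of 2 k a] assms(1) unfolding max real_a by simp
    then show ?thesis
      using drift corner_drift_ge[of "real k"] assms(1) unfolding real_a by simp
  next
    case False
    then have "max 2 a = a"
      using assms(3) by simp
    moreover have "boundary_drift_bound (real a) (real a) (real k) \<le> (\<Sum>j\<in>{a..<k}. ?boundary j)"
      using assms by (intro boundary_sum_ge) auto
    moreover have "((real k)^3 - real k) / 12 \<le> edge_block_drift (real a) (real k) + boundary_drift_bound (real a) (real a) (real k)"
      using assms False by (intro edge_drift_ge) auto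
    ultimately show ?thesis
      using drift by simp
  qed
qed

lemma Sk_square_drift_ge:
  assumes "2 \<le> k" and "6 * k \<le> N" and "1 \<le> a" and "a \<le> 4 * k"
  shows "((real k)^3 - real k) / 12 \<le> (\<Sum>z\<in>{1..N}. Sk_rate N k a z * ((real z)\<^sup>2 - (real a)\<^sup>2))"
proof (cases "k \<le> a")
  case True
  define X where "X = (real k)^3 - real k"
  have "0 \<le> X"
    using power_increasing[of 1 3 "real k"] assms(1) unfolding X_def by simp
  moreover have "(\<Sum>z\<in>{1..N}. Sk_rate N k a z * ((real z)\<^sup>2 - (real a)\<^sup>2)) = X / 6"
    unfolding X_def using True assms by (intro Sk_square_drift_bulk) auto
  ultimately show ?thesis
    unfolding X_def[symmetric] by linarith
next
  case False
  then show ?thesis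
    using assms by (intro Sk_square_drift_edge_ge) auto
qed

section \<open>Survival bound\<close>

lemma Sk_gen_outside_nonneg:
  assumes "1 \<le> k" and "6 * k \<le> N" and a: "a \<in> {1..4 * k}" and c: "c \<notin> {1..4 * k}"
  shows "0 \<le> Sk_gen N k a c * (25 - (real c)\<^sup>2 / (real k)\<^sup>2)"
proof (cases "a + k \<le> c")
  case True
  then show ?thesis
    using Sk_rate_eq_0_far[OF assms(2) _ True] a c by (simp add: Sk_gen_def)
next
  case False
  then have "(real c)\<^sup>2 \<le> (5 * real k)\<^sup>2"
    using a by (intro power_mono) auto
  then have "(real c)\<^sup>2 / (real k)\<^sup>2 \<le> 25"
    using assms(1) by (simp add: divide_le_eq power_mult_distrib)
  then show ?thesis
    using a c by (auto simp: Sk_gen_def Sk_rate_nonneg)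
qed

lemma Sk_gen_sum_square_le:
  assumes "2 \<le> k" and "6 * k \<le> N" and a: "a \<in> {1..4 * k}"
  shows "(\<Sum>c\<in>{1..N}. Sk_gen N k a c * (25 - (real c)\<^sup>2 / (real k)\<^sup>2))
    \<le> - (real k / 400) * (25 - (real a)\<^sup>2 / (real k)\<^sup>2)"
proof -
  have k: "0 < real k"
    using assms(1) by simp
  have "(\<Sum>c\<in>{1..N}. Sk_gen N k a c * (25 - (real c)\<^sup>2 / (real k)\<^sup>2)) =
      (\<Sum>c\<in>{1..N}. Sk_rate N k a c * ((25 - (real c)\<^sup>2 / (real k)\<^sup>2) - (25 - (real a)\<^sup>2 / (real k)\<^sup>2)))"
    using a assms(2) by (intro Sk_gen_sum_eq) auto
  also have "\<dots> = (\<Sum>c\<in>{1..N}. - (Sk_rate N k a c * ((real c)\<^sup>2 - (real a)\<^sup>2)) / (real k)\<^sup>2)"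
    using k by (intro sum.cong) (simp_all add: field_simps)
  also have "\<dots> = - (\<Sum>c\<in>{1..N}. Sk_rate N k a c * ((real c)\<^sup>2 - (real a)\<^sup>2)) / (real k)\<^sup>2"
    by (simp add: sum_divide_distrib[symmetric] sum_negf)
  also have "\<dots> \<le> - (((real k)^3 - real k) / 12) / (real k)\<^sup>2"
  proof -
    have "((real k)^3 - real k) / 12 \<le> (\<Sum>c\<in>{1..N}. Sk_rate N k a c * ((real c)\<^sup>2 - (real a)\<^sup>2))"
      using Sk_square_drift_ge[OF assms(1,2)] a by auto
    from divide_right_mono[OF this, of "(real k)\<^sup>2"] show ?thesis
      by simp
  qed
  also have "\<dots> \<le> - (real k / 400) * 25"
  proof -
    have "4 \<le> (real k)\<^sup>2"
      using power_mono[of 2 "real k" 2] assms(1) by simp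
    then show ?thesis
      using k by (simp add: field_simps power2_eq_square power3_eq_cube)
  qed
  also have "\<dots> \<le> - (real k / 400) * (25 - (real a)\<^sup>2 / (real k)\<^sup>2)"
    using k by simp
  finally show ?thesis .
qed

lemma Sk_gen_lyapunov:
  assumes "2 \<le> k" and "6 * k \<le> N" and "a \<in> {1..4 * k}"
  shows "(\<Sum>c\<in>{1..4 * k}. Sk_gen N k a c * (25 - (real c)\<^sup>2 / (real k)\<^sup>2))
    \<le> - (real k / 400) * (25 - (real a)\<^sup>2 / (real k)\<^sup>2)"
proof -
  let ?f = "\<lambda>c. Sk_gen N k a c * (25 - (real c)\<^sup>2 / (real k)\<^sup>2)"
  have "{1..4 * k} \<subseteq> {1..N}"
    using assms(2) by auto
  then have "(\<Sum>c\<in>{1..N}. ?f c) = (\<Sum>c\<in>{1..N} - {1..4 * k}. ?f c) + (\<Sum>c\<in>{1..4 * k}. ?f c)"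
    by (intro sum.subset_diff) auto
  moreover have "0 \<le> (\<Sum>c\<in>{1..N} - {1..4 * k}. ?f c)"
    using assms by (intro sum_nonneg Sk_gen_outside_nonneg) auto
  ultimately show ?thesis
    using Sk_gen_sum_square_le[OF assms] by linarith
qed

lemma surv_gt_le_half:
  assumes "2 \<le> k" and "6 * k \<le> N"
  shows "surv_gt N k (4 * k) (8000 / real k) x \<le> 1 / 2"
proof (cases "x \<in> {1..4 * k}")
  case False
  then show ?thesis
    unfolding surv_gt_def if_not_P[OF False] by simp
next
  case True
  define g where "g c = 25 - (real c)\<^sup>2 / (real k)\<^sup>2" for c :: nat
  have k: "0 < real k"
    using assms(1) by simp
  have g_ge_1: "1 \<le> g c" if "c \<in> {1..4 * k}" for c
  proof -
    have "(real c)\<^sup>2 \<le> (4 * real k)\<^sup>2"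
      using that by (intro power_mono) auto
    then have "(real c)\<^sup>2 / (real k)\<^sup>2 \<le> 16"
      using k by (simp add: divide_le_eq power_mult_distrib)
    then show ?thesis
      by (simp add: g_def)
  qed
  have "surv_gt N k (4 * k) (8000 / real k) x =
      (\<Sum>b\<in>{1..4 * k}. killed_kernel (Sk_gen N k) {1..4 * k} (8000 / real k) x b)"
    unfolding surv_gt_def if_P[OF True] ..
  also have "\<dots> \<le> exp (- (real k / 400) * (8000 / real k)) * g x"
  proof (rule killed_kernel_mass_le)
    show "finite {1..4 * k}" and "x \<in> {1..4 * k}" and "0 \<le> 8000 / real k"
      using True by simp_all
    show "0 \<le> Sk_gen N k y z" if "y \<noteq> z" for y z
      using that by (simp add: Sk_gen_def Sk_rate_nonneg)
    show "(\<Sum>c\<in>{1..4 * k}. Sk_gen N k y c * g c) \<le> - (real k / 400) * g y" if "y \<in> {1..4 * k}" for y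
      using Sk_gen_lyapunov[OF assms that] unfolding g_def .
  qed (rule g_ge_1)
  also have "\<dots> \<le> exp (- 20) * 25"
    using k by (simp add: g_def)
  also have "\<dots> \<le> 1 / 2"
  proof -
    have "11 \<le> exp (10 :: real)"
      using exp_ge_add_one_self[of 10] by simp
    then have "11 * 11 \<le> exp (10 :: real) * exp 10"
      by (intro mult_mono) auto
    then have "50 \<le> exp (20 :: real)"
      by (simp add: exp_add[symmetric])
    then show ?thesis
      by (simp add: exp_minus field_simps)
  qed
  finally show ?thesis .
qed

theorem lemma5p3:
  shows "\<exists>C::real. C > 0 \<and> (\<exists>c::real. 0 < c \<and> c < 1 \<and>
    (\<forall>k::nat \<Rightarrow> nat. (\<forall>N. 2 \<le> k N) \<and> ((\<lambda>N. real (k N) / real N) \<longlonglongrightarrow> 0) \<longrightarrow>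
       (\<forall>\<^sub>F N in sequentially. \<forall>x\<in>{1..N}.
          surv_gt N (k N) (4 * k N) (C / real (k N)) x \<le> c)))"
proof (intro exI conjI allI impI)
  show "(0::real) < 8000" and "(0::real) < 1 / 2" and "(1 / 2 :: real) < 1"
    by simp_all
  fix k :: "nat \<Rightarrow> nat"
  assume "(\<forall>N. 2 \<le> k N) \<and> (\<lambda>N. real (k N) / real N) \<longlonglongrightarrow> 0"
  then have k2: "\<And>N. 2 \<le> k N" and lim: "(\<lambda>N. real (k N) / real N) \<longlonglongrightarrow> 0"
    by auto
  have "\<forall>\<^sub>F N in sequentially. real (k N) / real N < 1 / 6"
    using lim by (rule order_tendstoD) simp
  moreover have "\<forall>\<^sub>F N in sequentially. 1 \<le> N"
    by (rule eventually_ge_at_top)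
  ultimately show "\<forall>\<^sub>F N in sequentially. \<forall>x\<in>{1..N}. surv_gt N (k N) (4 * k N) (8000 / real (k N)) x \<le> 1 / 2"
  proof eventually_elim
    case (elim N)
    then have "6 * k N \<le> N"
      by (simp add: divide_less_eq)
    then show ?case
      using surv_gt_le_half[OF k2] by blast
  qed
qed

end
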